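(* Let $\pi=(\pi_n^{n+1}\colon(X_{n+1},f_{n+1})\to(X_n,f_n))_{n\ge1}$ be an inverse sequence of equivariant maps and let $(X,f)=\lim_\pi(X_n,f_n)$. Then $CR(f)=\{x=(x_n)_{n\ge1}\in X: x_n\in CR(f_n)\ \text{for all } n\ge1\}$.
   Context: Each $X_n$ is a compact metric space, $f_n$ a continuous self-map, $\pi_n^{n+1}\colon X_{n+1}\to X_n$ continuous with $f_n\circ\pi_n^{n+1}=\pi_n^{n+1}\circ f_{n+1}$. $X=\{(x_n)\in\prod_n X_n:\pi_n^{n+1}(x_{n+1})=x_n\ \forall n\}$ with the product topology and $f((x_n))=(f_n(x_n))$. For a continuous map $g$ of a compact metric space $(Y,d)$, a $\delta$-chain is a finite sequence $(y_i)_{i=0}^k$, $k>0$, with $d(g(y_i),y_{i+1})\le\delta$ for all $i<k$, and $CR(g)$ is the set of $y$ such that for every $\delta>0$ there is a $\delta$-chain with $y_0=y_k=y$. *)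

theory Defs
  imports "HOL-Analysis.Analysis"
begin

definition delta_chain :: "('a::metric_space \<Rightarrow> 'a) \<Rightarrow> 'a set \<Rightarrow> real \<Rightarrow> nat \<Rightarrow> (nat \<Rightarrow> 'a) \<Rightarrow> bool" where
  "delta_chain g Y \<delta> k y \<longleftrightarrow> 0 < k \<and> (\<forall>i\<le>k. y i \<in> Y) \<and> (\<forall>i<k. dist (g (y i)) (y (Suc i)) \<le> \<delta>)"

definition CR :: "('a::metric_space \<Rightarrow> 'a) \<Rightarrow> 'a set \<Rightarrow> 'a set" where
  "CR g Y = {x \<in> Y. \<forall>\<delta>>0. \<exists>k y. delta_chain g Y \<delta> k y \<and> y 0 = x \<and> y k = x}"

text \<open>Inverse limit of (Xs n, pi n : Xs (Suc n) \<rightarrow> Xs n), as a subset of nat \<Rightarrow> 'a,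
  which carries the metric of Function_Metric inducing the product topology.\<close>

definition inv_lim :: "(nat \<Rightarrow> 'a set) \<Rightarrow> (nat \<Rightarrow> 'a \<Rightarrow> 'a) \<Rightarrow> (nat \<Rightarrow> 'a) set" where
  "inv_lim Xs \<pi> = {x. (\<forall>n. x n \<in> Xs n) \<and> (\<forall>n. \<pi> n (x (Suc n)) = x n)}"

definition lim_map :: "(nat \<Rightarrow> 'a \<Rightarrow> 'a) \<Rightarrow> (nat \<Rightarrow> 'a) \<Rightarrow> (nat \<Rightarrow> 'a)" where
  "lim_map fs x = (\<lambda>n. fs n (x n))"

end

theory Submission
  imports Defs
begin

text \<open>Coordinate projections of the inverse limit are uniformly continuous and equivariant,
  so they carry fine chains to small chains; this gives one inclusion. Conversely, the
  coordinates below N of a thread are determined by its N-th coordinate through uniformly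
  continuous bonding maps, so two threads are close once their N-th coordinates are close.
  By compactness, for large m the image of X_(N+m) in X_N lies arbitrarily close to the
  projection of X. A fine chain of x_(N+m) in X_(N+m), pushed down to X_N and moved to
  nearby N-th coordinates of threads, therefore yields a delta-chain of x in X.\<close>

lemma dist_component_le:
  fixes x y :: "'i::countable \<Rightarrow> 'a::metric_space"
  shows "(1/2) ^ to_nat i * min (dist (x i) (y i)) 1 \<le> dist x y"
proof -
  let ?term = "\<lambda>p. (1/2) ^ p * min (dist (x (from_nat p)) (y (from_nat p))) 1"
  have "summable ?term"
    by (rule summable_comparison_test'[of "\<lambda>p. (1/2) ^ p"]) auto
  then have "sum ?term {to_nat i} \<le> suminf ?term"
    by (rule sum_le_suminf) auto
  then show ?thesis
    by (simp add: dist_fun_def)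
qed

lemma uniformly_continuous_on_component:
  "uniformly_continuous_on S (\<lambda>x::'i::countable \<Rightarrow> 'a::metric_space. x i)"
  unfolding uniformly_continuous_on_def
proof (intro allI impI)
  fix e :: real
  assume "e > 0"
  let ?w = "(1/2::real) ^ to_nat i"
  have "dist (x i) (y i) < e" if "dist y x < ?w * min e 1" for x y :: "'i \<Rightarrow> 'a"
  proof -
    have "dist x y < ?w * min e 1"
      using that by (simp add: dist_commute)
    then have "?w * min (dist (x i) (y i)) 1 < ?w * min e 1"
      using dist_component_le[of i x y] by linarith
    then have "min (dist (x i) (y i)) 1 < min e 1"
      by simp
    then show ?thesis
      by (auto simp: min_def split: if_splits)
  qed
  moreover have "?w * min e 1 > 0"
    using \<open>e > 0\<close> by simp
  ultimately show "\<exists>d>0. \<forall>x\<in>S. \<forall>y\<in>S. dist y x < d \<longrightarrow> dist (y i) (x i) < e"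
    by (metis dist_commute)
qed

lemma dist_fun_less_if_components_close:
  assumes "\<delta> > 0"
  obtains F and \<epsilon> :: real where "finite F" "\<epsilon> > 0"
    "\<And>x y :: 'i::countable \<Rightarrow> 'a::metric_space. (\<forall>i\<in>F. dist (x i) (y i) < \<epsilon>) \<Longrightarrow> dist x y < \<delta>"
proof -
  obtain N :: nat where N: "(1/2::real) ^ N < \<delta>/2"
    using real_arch_pow_inv[of "\<delta>/2" "1/2::real"] assms by auto
  show ?thesis
  proof (rule that[of "from_nat ` {..N}" "\<delta>/4"])
    fix x y :: "'i \<Rightarrow> 'a"
    assume close: "\<forall>i\<in>from_nat ` {..N}. dist (x i) (y i) < \<delta>/4"
    have "Max {dist (x (from_nat n)) (y (from_nat n)) |n. n \<le> N}
        = Max ((\<lambda>n. dist (x (from_nat n)) (y (from_nat n))) ` {..N})"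
      by (rule arg_cong[where f = Max]) auto
    also have "\<dots> < \<delta>/4"
      using close by (subst Max_less_iff) auto
    finally have "Max {dist (x (from_nat n)) (y (from_nat n)) |n. n \<le> N} < \<delta>/4" .
    then show "dist x y < \<delta>"
      using dist_fun_le_dist_first_terms[of x y N] N by linarith
  qed (use assms in auto)
qed

lemma uniformly_continuous_on_eventually:
  assumes "uniformly_continuous_on S f" "e > 0"
  shows "\<forall>\<^sub>F d in at_right 0. \<forall>a\<in>S. \<forall>b\<in>S. dist a b < d \<longrightarrow> dist (f a) (f b) < e"
proof -
  obtain d0 where "d0 > 0" "\<forall>a\<in>S. \<forall>b\<in>S. dist a b < d0 \<longrightarrow> dist (f a) (f b) < e"
    using assms unfolding uniformly_continuous_on_def by blast
  then show ?thesis
    unfolding eventually_at_right_field by (intro exI[of _ d0]) auto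
qed

lemma delta_chain_image:
  assumes h_uc: "uniformly_continuous_on Y h" and h_maps: "h ` Y \<subseteq> Z"
    and g_maps: "g ` Y \<subseteq> Y" and semiconj: "\<And>y. y \<in> Y \<Longrightarrow> h (g y) = g' (h y)"
    and "\<delta> > 0"
  obtains \<delta>' where "\<delta>' > 0" "\<And>k c. delta_chain g Y \<delta>' k c \<Longrightarrow> delta_chain g' Z \<delta> k (h \<circ> c)"
proof -
  obtain d where "d > 0" and d: "\<And>a b. a \<in> Y \<Longrightarrow> b \<in> Y \<Longrightarrow> dist a b < d \<Longrightarrow> dist (h a) (h b) < \<delta>"
    using h_uc \<open>\<delta> > 0\<close> unfolding uniformly_continuous_on_def by metis
  have "delta_chain g' Z \<delta> k (h \<circ> c)" if c: "delta_chain g Y (d/2) k c" for k c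
    unfolding delta_chain_def
  proof (intro conjI allI impI)
    show "0 < k" "\<And>j. j \<le> k \<Longrightarrow> (h \<circ> c) j \<in> Z"
      using c h_maps by (auto simp: delta_chain_def)
    fix j
    assume "j < k"
    then have "c j \<in> Y" "c (Suc j) \<in> Y" "dist (g (c j)) (c (Suc j)) < d"
      using c \<open>d > 0\<close> unfolding delta_chain_def by force+
    then have "dist (h (g (c j))) (h (c (Suc j))) < \<delta>"
      using d g_maps by blast
    then show "dist (g' ((h \<circ> c) j)) ((h \<circ> c) (Suc j)) \<le> \<delta>"
      using semiconj \<open>c j \<in> Y\<close> by simp
  qed
  then show ?thesis
    using that[of "d/2"] \<open>d > 0\<close> by simp
qed

lemma CR_image_subset:
  assumes "uniformly_continuous_on Y h" "h ` Y \<subseteq> Z"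
    and "g ` Y \<subseteq> Y" "\<And>y. y \<in> Y \<Longrightarrow> h (g y) = g' (h y)"
  shows "h ` CR g Y \<subseteq> CR g' Z"
proof (intro image_subsetI)
  fix x
  assume x: "x \<in> CR g Y"
  have "\<exists>k c. delta_chain g' Z \<delta> k c \<and> c 0 = h x \<and> c k = h x" if "\<delta> > 0" for \<delta>
  proof -
    obtain \<delta>' where "\<delta>' > 0" and image: "\<And>k c. delta_chain g Y \<delta>' k c \<Longrightarrow> delta_chain g' Z \<delta> k (h \<circ> c)"
      using delta_chain_image[of Y h Z g g' \<delta>] assms \<open>\<delta> > 0\<close> by blast
    then obtain k c where "delta_chain g Y \<delta>' k c" "c 0 = x" "c k = x"
      using x unfolding CR_def by blast
    then show ?thesis
      using image by force
  qed
  then show "h x \<in> CR g' Z"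
    using x assms(2) unfolding CR_def by blast
qed

lemma delta_chain_of_nearby_points:
  assumes "uniformly_continuous_on Z g" "\<epsilon> > 0"
  obtains \<rho> where "\<rho> > 0"
    "\<And>k u w. delta_chain g Z \<epsilon> k u \<Longrightarrow> (\<And>j. j \<le> k \<Longrightarrow> w j \<in> Z \<and> dist (u j) (w j) < \<rho>)
      \<Longrightarrow> delta_chain g Z (3 * \<epsilon>) k w"
proof -
  obtain d where "d > 0" and d: "\<And>a b. a \<in> Z \<Longrightarrow> b \<in> Z \<Longrightarrow> dist a b < d \<Longrightarrow> dist (g a) (g b) < \<epsilon>"
    using assms unfolding uniformly_continuous_on_def by metis
  have "delta_chain g Z (3 * \<epsilon>) k w"
    if u: "delta_chain g Z \<epsilon> k u" and w: "\<And>j. j \<le> k \<Longrightarrow> w j \<in> Z \<and> dist (u j) (w j) < min d \<epsilon>"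
    for k u w
    unfolding delta_chain_def
  proof (intro conjI allI impI)
    show "0 < k" "\<And>j. j \<le> k \<Longrightarrow> w j \<in> Z"
      using u w by (auto simp: delta_chain_def)
    fix j
    assume "j < k"
    then have "dist (g (w j)) (g (u j)) < \<epsilon>"
      using d u w[of j] by (simp add: delta_chain_def dist_commute)
    moreover have "dist (g (u j)) (u (Suc j)) \<le> \<epsilon>"
      using u \<open>j < k\<close> by (simp add: delta_chain_def)
    moreover have "dist (u (Suc j)) (w (Suc j)) < \<epsilon>"
      using w[of "Suc j"] \<open>j < k\<close> by simp
    ultimately show "dist (g (w j)) (w (Suc j)) \<le> 3 * \<epsilon>"
      using dist_triangle[of "g (w j)" "w (Suc j)" "g (u j)"]
        dist_triangle[of "g (u j)" "w (Suc j)" "u (Suc j)"] by linarith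
  qed
  then show ?thesis
    using that[of "min d \<epsilon>"] \<open>d > 0\<close> \<open>\<epsilon> > 0\<close> by simp
qed

lemma nearby_points_fixing_endpoints:
  assumes near: "\<And>j. j \<le> k \<Longrightarrow> \<exists>y\<in>Y. dist (u j) (p y) < \<rho>"
    and "x \<in> Y" "u 0 = p x" "u k = p x" "\<rho> > 0"
  obtains w where "\<And>j. j \<le> k \<Longrightarrow> w j \<in> Y \<and> dist (u j) (p (w j)) < \<rho>" "w 0 = x" "w k = x"
proof -
  have "\<forall>j. \<exists>y. j \<le> k \<longrightarrow> y \<in> Y \<and> dist (u j) (p y) < \<rho>"
    using near by blast
  then obtain y where y: "\<And>j. j \<le> k \<Longrightarrow> y j \<in> Y \<and> dist (u j) (p (y j)) < \<rho>"
    unfolding choice_iff by blast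
  show ?thesis
    by (rule that[of "y(0 := x, k := x)"]) (use y assms in auto)
qed

text \<open>\<open>bonding_map \<pi> i k\<close> is the composite bonding map \<pi>_i^(i+k) : X_(i+k) \<rightarrow> X_i.\<close>

fun bonding_map :: "(nat \<Rightarrow> 'a \<Rightarrow> 'a) \<Rightarrow> nat \<Rightarrow> nat \<Rightarrow> 'a \<Rightarrow> 'a" where
  "bonding_map \<pi> i 0 y = y"
| "bonding_map \<pi> i (Suc k) y = \<pi> i (bonding_map \<pi> (Suc i) k y)"

lemma bonding_map_inv_lim:
  assumes "x \<in> inv_lim Xs \<pi>"
  shows "bonding_map \<pi> i k (x (i + k)) = x i"
proof (induction k arbitrary: i)
  case (Suc k)
  from Suc.IH[of "Suc i"] show ?case
    using assms by (simp add: inv_lim_def)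
qed simp

locale inverse_sequence =
  fixes Xs :: "nat \<Rightarrow> 'a::metric_space set" and \<pi> :: "nat \<Rightarrow> 'a \<Rightarrow> 'a"
  assumes compact_Xs: "\<And>n. compact (Xs n)"
    and continuous_on_\<pi>: "\<And>n. continuous_on (Xs (Suc n)) (\<pi> n)"
    and \<pi>_maps: "\<And>n. \<pi> n ` Xs (Suc n) \<subseteq> Xs n"
begin

lemma bonding_map_in: "y \<in> Xs (i + k) \<Longrightarrow> bonding_map \<pi> i k y \<in> Xs i"
proof (induction k arbitrary: i)
  case (Suc k)
  then have "bonding_map \<pi> (Suc i) k y \<in> Xs (Suc i)"
    by simp
  then show ?case
    using \<pi>_maps by auto
qed simp

lemma uniformly_continuous_on_bonding_map:
  "uniformly_continuous_on (Xs (i + k)) (bonding_map \<pi> i k)"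
proof -
  have "continuous_on (Xs (i + k)) (bonding_map \<pi> i k)"
  proof (induction k arbitrary: i)
    case 0
    show ?case
      by simp
  next
    case (Suc k)
    have "continuous_on (Xs (Suc i + k)) (bonding_map \<pi> (Suc i) k)"
      by (rule Suc.IH)
    moreover have "bonding_map \<pi> (Suc i) k ` Xs (Suc i + k) \<subseteq> Xs (Suc i)"
      using bonding_map_in by auto
    ultimately show ?case
      by (auto intro: continuous_on_compose2[OF continuous_on_\<pi>])
  qed
  then show ?thesis
    using compact_Xs compact_uniformly_continuous by blast
qed

lemma compact_PiE_Xs: "compact (Pi\<^sub>E UNIV Xs)"
proof -
  have "compactin (product_topology (\<lambda>i. euclidean) UNIV) (Pi\<^sub>E UNIV Xs)"
    using compact_Xs by (simp add: compactin_PiE)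
  then show ?thesis
    by (simp add: euclidean_product_topology)
qed

lemma limit_in_inv_lim:
  assumes t: "\<And>m. t m \<in> Pi\<^sub>E UNIV Xs" and lim: "t \<longlonglongrightarrow> l"
    and compatible: "\<And>i. \<forall>\<^sub>F m in sequentially. \<pi> i (t m (Suc i)) = t m i"
  shows "l \<in> inv_lim Xs \<pi>"
proof -
  have coord: "(\<lambda>m. t m i) \<longlonglongrightarrow> l i" for i
    using continuous_on_tendsto_compose[OF continuous_on_product_coordinates lim] by simp
  have l_in: "l i \<in> Xs i" for i
    using closed_sequentially[OF compact_imp_closed[OF compact_Xs] _ coord] t by (auto simp: PiE_iff)
  have "\<pi> i (l (Suc i)) = l i" for i
  proof -
    have "(\<lambda>m. \<pi> i (t m (Suc i))) \<longlonglongrightarrow> \<pi> i (l (Suc i))"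
      by (rule continuous_on_tendsto_compose[OF continuous_on_\<pi> coord])
        (use t l_in in \<open>auto simp: PiE_iff\<close>)
    then have "(\<lambda>m. t m i) \<longlonglongrightarrow> \<pi> i (l (Suc i))"
      using compatible[of i] by (rule Lim_transform_eventually)
    then show ?thesis
      using coord[of i] LIMSEQ_unique by blast
  qed
  then show ?thesis
    using l_in by (simp add: inv_lim_def)
qed

lemma bonding_image_near_inv_lim:
  assumes "\<rho> > 0"
  obtains m where "\<And>v. v \<in> Xs (N + m) \<Longrightarrow> \<exists>y\<in>inv_lim Xs \<pi>. dist (bonding_map \<pi> N m v) (y N) < \<rho>"
proof (rule ccontr)
  \<comment> \<open>Otherwise the far points lift to partial threads, a subsequence of which converges to
    a thread whose N-th coordinate comes \<rho>-close to them.\<close>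
  assume "\<not> thesis"
  then have "\<forall>m. \<exists>v\<in>Xs (N + m). \<forall>y\<in>inv_lim Xs \<pi>. \<rho> \<le> dist (bonding_map \<pi> N m v) (y N)"
    using that by (meson not_less)
  then obtain vs where vs: "\<And>m. vs m \<in> Xs (N + m)"
    and far: "\<And>m y. y \<in> inv_lim Xs \<pi> \<Longrightarrow> \<rho> \<le> dist (bonding_map \<pi> N m (vs m)) (y N)"
    by metis
  have nonempty: "Xs i \<noteq> {}" for i
    using bonding_map_in[of "vs i" i N] vs[of i] by (auto simp: add.commute)
  define t where
    "t m i = (if i \<le> N + m then bonding_map \<pi> i (N + m - i) (vs m) else (SOME a. a \<in> Xs i))" for m i
  have t: "t m \<in> Pi\<^sub>E UNIV Xs" for m
    using bonding_map_in[of "vs m"] vs[of m] nonempty by (auto simp: t_def PiE_iff some_in_eq)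
  obtain l r where "strict_mono r" and lim: "(t \<circ> r) \<longlonglongrightarrow> l"
    using compact_imp_seq_compact[OF compact_PiE_Xs] t unfolding seq_compact_def by meson
  have "l \<in> inv_lim Xs \<pi>"
  proof (rule limit_in_inv_lim[OF _ lim])
    show "(t \<circ> r) m \<in> Pi\<^sub>E UNIV Xs" for m
      using t by simp
    show "\<forall>\<^sub>F m in sequentially. \<pi> i ((t \<circ> r) m (Suc i)) = (t \<circ> r) m i" for i
    proof (rule eventually_sequentiallyI[of "Suc i"])
      fix m
      assume "Suc i \<le> m"
      then have "Suc i \<le> N + r m" "N + r m - i = Suc (N + r m - Suc i)"
        using seq_suble[OF \<open>strict_mono r\<close>, of m] by linarith+
      then show "\<pi> i ((t \<circ> r) m (Suc i)) = (t \<circ> r) m i"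
        by (simp add: t_def)
    qed
  qed
  moreover have "(\<lambda>m. t (r m) N) \<longlonglongrightarrow> l N"
    using continuous_on_tendsto_compose[OF continuous_on_product_coordinates lim] by (simp add: o_def)
  then obtain M where "dist (t (r M) N) (l N) < \<rho>"
    using metric_LIMSEQ_D[OF _ \<open>\<rho> > 0\<close>] by blast
  ultimately show False
    using far[of l "r M"] by (simp add: t_def)
qed

lemma inv_lim_close_if_component_close:
  assumes "\<delta> > 0"
  obtains \<eta> N where "\<eta> > 0"
    "\<And>y z. y \<in> inv_lim Xs \<pi> \<Longrightarrow> z \<in> inv_lim Xs \<pi> \<Longrightarrow> dist (y N) (z N) < \<eta> \<Longrightarrow> dist y z < \<delta>"
proof -
  obtain F \<epsilon> where "finite F" "\<epsilon> > 0"
    and close: "\<And>y z :: nat \<Rightarrow> 'a. (\<forall>i\<in>F. dist (y i) (z i) < \<epsilon>) \<Longrightarrow> dist y z < \<delta>"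
    using dist_fun_less_if_components_close[OF assms] by blast
  define N where "N = Max (insert 0 F)"
  have le_N: "i \<le> N" if "i \<in> F" for i
    using \<open>finite F\<close> that by (simp add: N_def)
  have "\<forall>\<^sub>F \<eta> in at_right 0. \<forall>i\<in>F. \<forall>a\<in>Xs N. \<forall>b\<in>Xs N.
      dist a b < \<eta> \<longrightarrow> dist (bonding_map \<pi> i (N - i) a) (bonding_map \<pi> i (N - i) b) < \<epsilon>"
  proof (intro eventually_ball_finite[OF \<open>finite F\<close>] ballI)
    fix i
    assume "i \<in> F"
    then have "uniformly_continuous_on (Xs N) (bonding_map \<pi> i (N - i))"
      using uniformly_continuous_on_bonding_map[of i "N - i"] le_N by simp
    from uniformly_continuous_on_eventually[OF this \<open>\<epsilon> > 0\<close>]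
    show "\<forall>\<^sub>F \<eta> in at_right 0. \<forall>a\<in>Xs N. \<forall>b\<in>Xs N.
        dist a b < \<eta> \<longrightarrow> dist (bonding_map \<pi> i (N - i) a) (bonding_map \<pi> i (N - i) b) < \<epsilon>" .
  qed
  from eventually_conj[OF eventually_at_right_less this]
  obtain \<eta> where "\<eta> > 0" and \<eta>: "\<forall>i\<in>F. \<forall>a\<in>Xs N. \<forall>b\<in>Xs N.
      dist a b < \<eta> \<longrightarrow> dist (bonding_map \<pi> i (N - i) a) (bonding_map \<pi> i (N - i) b) < \<epsilon>"
    using eventually_happens'[OF trivial_limit_at_right_real] by blast
  show ?thesis
  proof (rule that[OF \<open>\<eta> > 0\<close>])
    fix y z
    assume y: "y \<in> inv_lim Xs \<pi>" and z: "z \<in> inv_lim Xs \<pi>" and "dist (y N) (z N) < \<eta>"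
    have "dist (y i) (z i) < \<epsilon>" if "i \<in> F" for i
    proof -
      have "y i = bonding_map \<pi> i (N - i) (y N)" "z i = bonding_map \<pi> i (N - i) (z N)"
        using bonding_map_inv_lim[OF y, of i "N - i"] bonding_map_inv_lim[OF z, of i "N - i"]
          le_N[OF that] by simp_all
      moreover have "y N \<in> Xs N" "z N \<in> Xs N"
        using y z by (simp_all add: inv_lim_def)
      ultimately show ?thesis
        using \<eta> that \<open>dist (y N) (z N) < \<eta>\<close> by simp
    qed
    then show "dist y z < \<delta>"
      using close by blast
  qed
qed

end

locale equivariant_inverse_sequence = inverse_sequence +
  fixes fs :: "nat \<Rightarrow> 'a::metric_space \<Rightarrow> 'a"
  assumes continuous_on_fs: "\<And>n. continuous_on (Xs n) (fs n)"
    and fs_maps: "\<And>n. fs n ` Xs n \<subseteq> Xs n"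
    and equivariant: "\<And>n y. y \<in> Xs (Suc n) \<Longrightarrow> fs n (\<pi> n y) = \<pi> n (fs (Suc n) y)"
begin

lemma lim_map_in_inv_lim:
  assumes x: "x \<in> inv_lim Xs \<pi>"
  shows "lim_map fs x \<in> inv_lim Xs \<pi>"
  unfolding inv_lim_def lim_map_def
proof (intro CollectI conjI allI)
  fix n
  show "fs n (x n) \<in> Xs n"
    using fs_maps x by (auto simp: inv_lim_def)
  show "\<pi> n (fs (Suc n) (x (Suc n))) = fs n (x n)"
    using equivariant[of "x (Suc n)" n] x by (simp add: inv_lim_def)
qed

lemma bonding_map_equivariant:
  "y \<in> Xs (i + k) \<Longrightarrow> bonding_map \<pi> i k (fs (i + k) y) = fs i (bonding_map \<pi> i k y)"
proof (induction k arbitrary: i)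
  case (Suc k)
  have y: "y \<in> Xs (Suc i + k)"
    using Suc.prems by simp
  have "bonding_map \<pi> i (Suc k) (fs (i + Suc k) y) = \<pi> i (fs (Suc i) (bonding_map \<pi> (Suc i) k y))"
    using Suc.IH[OF y] by simp
  also have "\<dots> = fs i (bonding_map \<pi> i (Suc k) y)"
    using equivariant[OF bonding_map_in[OF y]] by simp
  finally show ?case .
qed simp

lemma delta_chain_lift:
  assumes "\<delta> > 0"
  obtains \<eta> N where "\<eta> > 0"
    "\<And>k y. (\<And>j. j \<le> k \<Longrightarrow> y j \<in> inv_lim Xs \<pi>) \<Longrightarrow> delta_chain (fs N) (Xs N) \<eta> k (\<lambda>j. y j N)
      \<Longrightarrow> delta_chain (lim_map fs) (inv_lim Xs \<pi>) \<delta> k y"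
proof -
  obtain N \<eta> where "\<eta> > 0" and close: "\<And>y z. y \<in> inv_lim Xs \<pi> \<Longrightarrow> z \<in> inv_lim Xs \<pi> \<Longrightarrow>
      dist (y N) (z N) < \<eta> \<Longrightarrow> dist y z < \<delta>"
    using inv_lim_close_if_component_close[OF assms] by blast
  have "delta_chain (lim_map fs) (inv_lim Xs \<pi>) \<delta> k y"
    if y: "\<And>j. j \<le> k \<Longrightarrow> y j \<in> inv_lim Xs \<pi>" and chain: "delta_chain (fs N) (Xs N) (\<eta>/2) k (\<lambda>j. y j N)"
    for k y
    unfolding delta_chain_def
  proof (intro conjI allI impI)
    show "0 < k"
      using chain by (simp add: delta_chain_def)
    show "\<And>j. j \<le> k \<Longrightarrow> y j \<in> inv_lim Xs \<pi>"
      by (rule y)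
    fix j
    assume "j < k"
    then have "dist (lim_map fs (y j) N) (y (Suc j) N) < \<eta>"
      using chain \<open>\<eta> > 0\<close> by (force simp: delta_chain_def lim_map_def)
    then show "dist (lim_map fs (y j)) (y (Suc j)) \<le> \<delta>"
      using close lim_map_in_inv_lim y \<open>j < k\<close> by (simp add: less_imp_le)
  qed
  then show ?thesis
    using that[of "\<eta>/2" N] \<open>\<eta> > 0\<close> by simp
qed

lemma CR_inv_lim_subset: "CR (lim_map fs) (inv_lim Xs \<pi>) \<subseteq> {x \<in> inv_lim Xs \<pi>. \<forall>n. x n \<in> CR (fs n) (Xs n)}"
proof (intro subsetI CollectI conjI allI)
  fix x n
  assume x: "x \<in> CR (lim_map fs) (inv_lim Xs \<pi>)"
  then show "x \<in> inv_lim Xs \<pi>"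
    by (simp add: CR_def)
  have "(\<lambda>y. y n) ` CR (lim_map fs) (inv_lim Xs \<pi>) \<subseteq> CR (fs n) (Xs n)"
  proof (rule CR_image_subset[OF uniformly_continuous_on_component])
    show "(\<lambda>y. y n) ` inv_lim Xs \<pi> \<subseteq> Xs n"
      by (auto simp: inv_lim_def)
    show "lim_map fs ` inv_lim Xs \<pi> \<subseteq> inv_lim Xs \<pi>"
      using lim_map_in_inv_lim by blast
    show "\<And>y. lim_map fs y n = fs n (y n)"
      by (simp add: lim_map_def)
  qed
  then show "x n \<in> CR (fs n) (Xs n)"
    using x by blast
qed

lemma CR_inv_lim_supset:
  assumes x: "x \<in> inv_lim Xs \<pi>" and x_CR: "\<And>n. x n \<in> CR (fs n) (Xs n)"
  shows "x \<in> CR (lim_map fs) (inv_lim Xs \<pi>)"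
  unfolding CR_def
proof (intro CollectI conjI allI impI)
  show "x \<in> inv_lim Xs \<pi>"
    by (rule x)
  fix \<delta> :: real
  assume "\<delta> > 0"
  obtain \<eta> N where "\<eta> > 0" and lift: "\<And>k y. (\<And>j. j \<le> k \<Longrightarrow> y j \<in> inv_lim Xs \<pi>) \<Longrightarrow>
      delta_chain (fs N) (Xs N) \<eta> k (\<lambda>j. y j N) \<Longrightarrow> delta_chain (lim_map fs) (inv_lim Xs \<pi>) \<delta> k y"
    using delta_chain_lift[OF \<open>\<delta> > 0\<close>] by metis
  have "\<eta>/3 > 0"
    using \<open>\<eta> > 0\<close> by simp
  have "uniformly_continuous_on (Xs N) (fs N)"
    using compact_Xs continuous_on_fs compact_uniformly_continuous by blast
  then obtain \<rho> where "\<rho> > 0" and nearby: "\<And>k u w. delta_chain (fs N) (Xs N) (\<eta>/3) k u \<Longrightarrow>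
      (\<And>j. j \<le> k \<Longrightarrow> w j \<in> Xs N \<and> dist (u j) (w j) < \<rho>) \<Longrightarrow> delta_chain (fs N) (Xs N) (3 * (\<eta>/3)) k w"
    using delta_chain_of_nearby_points[OF _ \<open>\<eta>/3 > 0\<close>] by metis
  obtain m where near: "\<And>v. v \<in> Xs (N + m) \<Longrightarrow> \<exists>y\<in>inv_lim Xs \<pi>. dist (bonding_map \<pi> N m v) (y N) < \<rho>"
    using bonding_image_near_inv_lim[OF \<open>\<rho> > 0\<close>] by blast
  have "bonding_map \<pi> N m ` Xs (N + m) \<subseteq> Xs N" "fs (N + m) ` Xs (N + m) \<subseteq> Xs (N + m)"
    using bonding_map_in fs_maps by auto
  from delta_chain_image[of "Xs (N + m)" "bonding_map \<pi> N m" "Xs N" "fs (N + m)" "fs N",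
      OF uniformly_continuous_on_bonding_map this bonding_map_equivariant \<open>\<eta>/3 > 0\<close>]
  obtain \<delta>' where "\<delta>' > 0" and image: "\<And>k c. delta_chain (fs (N + m)) (Xs (N + m)) \<delta>' k c \<Longrightarrow>
      delta_chain (fs N) (Xs N) (\<eta>/3) k (bonding_map \<pi> N m \<circ> c)"
    by metis
  obtain k v where v: "delta_chain (fs (N + m)) (Xs (N + m)) \<delta>' k v" "v 0 = x (N + m)" "v k = x (N + m)"
    using x_CR[of "N + m"] \<open>\<delta>' > 0\<close> unfolding CR_def by blast
  let ?u = "bonding_map \<pi> N m \<circ> v"
  have "\<exists>y\<in>inv_lim Xs \<pi>. dist (?u j) (y N) < \<rho>" if "j \<le> k" for j
    using near v(1) that by (simp add: delta_chain_def)
  moreover have "?u 0 = x N" "?u k = x N"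
    using v bonding_map_inv_lim[OF x, of N m] by simp_all
  ultimately obtain w where w: "\<And>j. j \<le> k \<Longrightarrow> w j \<in> inv_lim Xs \<pi> \<and> dist (?u j) (w j N) < \<rho>"
    and "w 0 = x" "w k = x"
    using nearby_points_fixing_endpoints[where p = "\<lambda>y. y N", OF _ x _ _ \<open>\<rho> > 0\<close>] by metis
  then have "delta_chain (fs N) (Xs N) (3 * (\<eta>/3)) k (\<lambda>j. w j N)"
    by (intro nearby[OF image[OF v(1)]]) (simp add: inv_lim_def)
  then have "delta_chain (lim_map fs) (inv_lim Xs \<pi>) \<delta> k w"
    using lift w by simp
  then show "\<exists>k y. delta_chain (lim_map fs) (inv_lim Xs \<pi>) \<delta> k y \<and> y 0 = x \<and> y k = x"
    using \<open>w 0 = x\<close> \<open>w k = x\<close> by blast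
qed

end

theorem lemma3p1:
  fixes Xs :: "nat \<Rightarrow> 'a::metric_space set"
    and fs :: "nat \<Rightarrow> 'a \<Rightarrow> 'a"
    and \<pi> :: "nat \<Rightarrow> 'a \<Rightarrow> 'a"
  assumes cpt: "\<And>n. compact (Xs n)"
    and fs_cont: "\<And>n. continuous_on (Xs n) (fs n)"
    and fs_maps: "\<And>n. fs n ` Xs n \<subseteq> Xs n"
    and pi_cont: "\<And>n. continuous_on (Xs (Suc n)) (\<pi> n)"
    and pi_maps: "\<And>n. \<pi> n ` Xs (Suc n) \<subseteq> Xs n"
    and equiv: "\<And>n y. y \<in> Xs (Suc n) \<Longrightarrow> fs n (\<pi> n y) = \<pi> n (fs (Suc n) y)"
  shows "CR (lim_map fs) (inv_lim Xs \<pi>) = {x \<in> inv_lim Xs \<pi>. \<forall>n. x n \<in> CR (fs n) (Xs n)}"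
proof -
  interpret equivariant_inverse_sequence Xs \<pi> fs
    by unfold_locales (fact assms)+
  show ?thesis
    using CR_inv_lim_subset CR_inv_lim_supset by blast
qed

end
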